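(* Let $G=(U,\alpha)$ and $H=(V,\beta)$ be connected graphs. Then $G$ and $H$ are weakly disjoint if and only if their transition matrices share no eigenvalue other than $1$.
   Context: A weight function on a finite set $U$ is a map $\alpha:U\times U\to\mathbb{R}$ with $\alpha\ge 0$, $\alpha(u,u')=\alpha(u',u)$, and $\sum_{u,u'\in U}\alpha(u,u')=1$; its degree function is $p(u)=\sum_{u'\in U}\alpha(u,u')$. A graph is a pair $G=(U,\alpha)$ with $U$ finite and $\alpha$ a weight function on $U$; its edge set is $E(G)=\{(u,u'):\alpha(u,u')>0\}$ (self-loops allowed). $G$ is connected if every two distinct vertices are joined by a path of edges; $G$ is fully supported if $p(u)>0$ for all $u$. For graphs $G=(U,\alpha)$, $H=(V,\beta)$ with degree functions $p,q$, a weight joining of $\alpha$ and $\beta$ is a weight function $\gamma$ on $U\times V$ whose degree function $r(u,v)=\sum_{(u',v')}\gamma((u,v),(u',v'))$ satisfies (a) $\sum_{v}r(u,v)=p(u)$ and $\sum_u r(u,v)=q(v)$ for all $u,v$, and (b) $p(u)\sum_{\tilde v\in V}\gamma((u,v),(u',\tilde v))=\alpha(u,u')r(u,v)$ and $q(v)\sum_{\tilde u\in U}\gamma((u,v),(\tilde u,v'))=\beta(v,v')r(u,v)$ for all $u,u'\in U$, $v,v'\in V$. A graph joining of $G$ and $H$ is a graph $K=(U\times V,\gamma)$ with $\gamma$ a weight joining of $\alpha,\beta$; $\mathcal{J}(G,H)$ denotes the set of these. $G$ and $H$ are weakly disjoint if every $K\in\mathcal{J}(G,H)$ has degree function equal to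 $p\otimes q$, i.e. $r(u,v)=p(u)q(v)$. The transition matrix of a fully supported graph $G=(U,\alpha)$ with $U=\{u_1,\dots,u_m\}$ is the $m\times m$ matrix with entries $\alpha(u_i,u_j)/p(u_i)$. *)

theory Defs
  imports Main "Jordan_Normal_Form.Char_Poly"
begin

(* A graph is represented by a finite vertex set U :: 'a set together with a
   weight function alpha :: 'a => 'a => real; only values on U x U matter. *)

definition weight_function :: "'a set \<Rightarrow> ('a \<Rightarrow> 'a \<Rightarrow> real) \<Rightarrow> bool" where
  "weight_function U \<alpha> \<longleftrightarrow>
     (\<forall>u\<in>U. \<forall>u'\<in>U. \<alpha> u u' \<ge> 0) \<and>
     (\<forall>u\<in>U. \<forall>u'\<in>U. \<alpha> u u' = \<alpha> u' u) \<and>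
     (\<Sum>u\<in>U. \<Sum>u'\<in>U. \<alpha> u u') = 1"

definition degree_fun :: "'a set \<Rightarrow> ('a \<Rightarrow> 'a \<Rightarrow> real) \<Rightarrow> 'a \<Rightarrow> real" where
  "degree_fun U \<alpha> u = (\<Sum>u'\<in>U. \<alpha> u u')"

definition is_graph :: "'a set \<Rightarrow> ('a \<Rightarrow> 'a \<Rightarrow> real) \<Rightarrow> bool" where
  "is_graph U \<alpha> \<longleftrightarrow> finite U \<and> weight_function U \<alpha>"

definition edge_rel :: "'a set \<Rightarrow> ('a \<Rightarrow> 'a \<Rightarrow> real) \<Rightarrow> 'a \<Rightarrow> 'a \<Rightarrow> bool" where
  "edge_rel U \<alpha> u u' \<longleftrightarrow> u \<in> U \<and> u' \<in> U \<and> \<alpha> u u' > 0"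

definition connected_graph :: "'a set \<Rightarrow> ('a \<Rightarrow> 'a \<Rightarrow> real) \<Rightarrow> bool" where
  "connected_graph U \<alpha> \<longleftrightarrow> is_graph U \<alpha> \<and>
     (\<forall>u\<in>U. \<forall>u'\<in>U. u \<noteq> u' \<longrightarrow> (edge_rel U \<alpha>)\<^sup>*\<^sup>* u u')"

definition fully_supported :: "'a set \<Rightarrow> ('a \<Rightarrow> 'a \<Rightarrow> real) \<Rightarrow> bool" where
  "fully_supported U \<alpha> \<longleftrightarrow> (\<forall>u\<in>U. degree_fun U \<alpha> u > 0)"

definition weight_joining ::
  "'a set \<Rightarrow> ('a \<Rightarrow> 'a \<Rightarrow> real) \<Rightarrow> 'b set \<Rightarrow> ('b \<Rightarrow> 'b \<Rightarrow> real)
   \<Rightarrow> ('a \<times> 'b \<Rightarrow> 'a \<times> 'b \<Rightarrow> real) \<Rightarrow> bool" where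
  "weight_joining U \<alpha> V \<beta> \<gamma> \<longleftrightarrow>
     weight_function (U \<times> V) \<gamma> \<and>
     (\<forall>u\<in>U. (\<Sum>v\<in>V. degree_fun (U \<times> V) \<gamma> (u, v)) = degree_fun U \<alpha> u) \<and>
     (\<forall>v\<in>V. (\<Sum>u\<in>U. degree_fun (U \<times> V) \<gamma> (u, v)) = degree_fun V \<beta> v) \<and>
     (\<forall>u\<in>U. \<forall>u'\<in>U. \<forall>v\<in>V. \<forall>v'\<in>V.
        degree_fun U \<alpha> u * (\<Sum>w\<in>V. \<gamma> (u, v) (u', w)) = \<alpha> u u' * degree_fun (U \<times> V) \<gamma> (u, v) \<and>
        degree_fun V \<beta> v * (\<Sum>w\<in>U. \<gamma> (u, v) (w, v')) = \<beta> v v' * degree_fun (U \<times> V) \<gamma> (u, v))"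

definition graph_joinings ::
  "'a set \<Rightarrow> ('a \<Rightarrow> 'a \<Rightarrow> real) \<Rightarrow> 'b set \<Rightarrow> ('b \<Rightarrow> 'b \<Rightarrow> real)
   \<Rightarrow> ('a \<times> 'b \<Rightarrow> 'a \<times> 'b \<Rightarrow> real) set" where
  "graph_joinings U \<alpha> V \<beta> = {\<gamma>. weight_joining U \<alpha> V \<beta> \<gamma>}"

definition weakly_disjoint ::
  "'a set \<Rightarrow> ('a \<Rightarrow> 'a \<Rightarrow> real) \<Rightarrow> 'b set \<Rightarrow> ('b \<Rightarrow> 'b \<Rightarrow> real) \<Rightarrow> bool" where
  "weakly_disjoint U \<alpha> V \<beta> \<longleftrightarrow>
     (\<forall>\<gamma>\<in>graph_joinings U \<alpha> V \<beta>. \<forall>u\<in>U. \<forall>v\<in>V.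
        degree_fun (U \<times> V) \<gamma> (u, v) = degree_fun U \<alpha> u * degree_fun V \<beta> v)"

definition vertex_enum :: "'a set \<Rightarrow> nat \<Rightarrow> 'a" where
  "vertex_enum U = (SOME e. bij_betw e {..<card U} U)"

definition transition_matrix :: "'a set \<Rightarrow> ('a \<Rightarrow> 'a \<Rightarrow> real) \<Rightarrow> real mat" where
  "transition_matrix U \<alpha> =
     mat (card U) (card U)
       (\<lambda>(i, j). \<alpha> (vertex_enum U i) (vertex_enum U j) / degree_fun U \<alpha> (vertex_enum U i))"

end

theory Submission
  imports Defs "Jordan_Normal_Form.Schur_Decomposition"
begin

text \<open>
  For a connected graph, write the eigen-equation of the transition matrix \<open>P = D\<^sup>-\<^sup>1\<alpha>\<close> as
  \<open>\<alpha> z = c D z\<close> with \<open>D = diag p\<close>. Since \<open>\<alpha>\<close> is symmetric the eigenvalues are real, and the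
  energy identity \<open>\<Sum> \<alpha>(u,u') (x u' - \<mu> x u)\<^sup>2 = (1 - \<mu>\<^sup>2) \<Sum> p u (x u)\<^sup>2\<close> shows
  \<open>\<bar>\<mu>\<bar> \<le> 1\<close>, that \<open>\<mu>\<^sup>2 = 1\<close> forces \<open>x u' = \<mu> x u\<close> along edges, and hence that the
  eigenvalue \<open>1\<close> only has constant eigenfunctions; for \<open>\<mu> \<noteq> 1\<close> eigenfunctions have \<open>p\<close>-mean zero.

  If \<open>G\<close> and \<open>H\<close> share an eigenvalue \<open>\<mu> \<noteq> 1\<close> with real eigenfunctions \<open>x\<close>, \<open>y\<close>, perturb the
  product weight to \<open>\<alpha>(u,u') \<beta>(v,v') (1 + \<epsilon> \<phi>(u,v,u',v'))\<close>, where \<open>\<phi> = x u y v\<close> if \<open>\<mu> = -1\<close>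
  and \<open>\<phi> = x u y v + x u' y v' - \<mu> (x u y v' + x u' y v)\<close> otherwise. For small \<open>\<epsilon>\<close> this is
  a joining with degree function \<open>p u q v (1 + \<epsilon> \<psi> u v)\<close>, \<open>\<psi>\<close> a nonzero multiple of
  \<open>x u y v\<close>, so the graphs are not weakly disjoint.

  Conversely, the degree function \<open>r\<close> of a joining gives a defect \<open>T u v = r u v / p u - q v\<close>
  with \<open>P T = T Q\<close>, zero row sums and zero \<open>p\<close>-weighted column sums. Hence \<open>T\<close> also intertwines
  \<open>P + \<one> p\<^sup>T\<close> and \<open>Q + 2 \<one> q\<^sup>T\<close>, in which the eigenvalue \<open>1\<close> has moved to \<open>2\<close> and \<open>3\<close>. All
  other eigenvalues lie in \<open>[-1,1]\<close> and \<open>1\<close> was the only common one, so these matrices share no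
  eigenvalue; a Sylvester equation \<open>A X = X B\<close> without common eigenvalues has only the solution
  \<open>X = 0\<close> (Schur triangularization), so \<open>r = p \<otimes> q\<close>.
\<close>

section \<open>Sylvester equations without common eigenvalues\<close>

lemma upper_triangular_intertwiner_eq_zero:
  fixes R S Y :: "'a::idom mat"
  assumes R: "R \<in> carrier_mat n n" and S: "S \<in> carrier_mat m m" and Y: "Y \<in> carrier_mat n m"
    and tri: "upper_triangular R" "upper_triangular S"
    and intertwine: "R * Y = Y * S"
    and distinct_diag: "\<And>i j. i < n \<Longrightarrow> j < m \<Longrightarrow> R $$ (i,i) \<noteq> S $$ (j,j)"
  shows "Y = 0\<^sub>m n m"
proof -
  \<comment> \<open>entries below and to the left of \<open>(i,j)\<close> are handled first\<close>
  have "Y $$ (i,j) = 0" if "i < n" "j < m" for i j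
    using that
  proof (induction "n - i + j" arbitrary: i j rule: less_induct)
    case less
    note i = \<open>i < n\<close> and j = \<open>j < m\<close>
    have below: "R $$ (i,k) * Y $$ (k,j) = 0" if "k < n" "k \<noteq> i" for k
      using less.hyps[of k j] that i j tri(1) R by (cases "k < i") (auto simp: upper_triangular_def)
    have left: "Y $$ (i,l) * S $$ (l,j) = 0" if "l < m" "l \<noteq> j" for l
      using less.hyps[of i l] that i j tri(2) S by (cases "l < j") (auto simp: upper_triangular_def)
    have "(R * Y) $$ (i,j) = (\<Sum>k\<in>{0..<n}. R $$ (i,k) * Y $$ (k,j))"
      using R Y i j by (simp add: scalar_prod_def)
    also have "\<dots> = R $$ (i,i) * Y $$ (i,j)"
      using i by (subst sum.remove[of _ i]) (auto intro!: sum.neutral simp: below)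
    finally have RY: "(R * Y) $$ (i,j) = R $$ (i,i) * Y $$ (i,j)" .
    have "(Y * S) $$ (i,j) = (\<Sum>l\<in>{0..<m}. Y $$ (i,l) * S $$ (l,j))"
      using S Y i j by (simp add: scalar_prod_def)
    also have "\<dots> = Y $$ (i,j) * S $$ (j,j)"
      using j by (subst sum.remove[of _ j]) (auto intro!: sum.neutral simp: left)
    finally have YS: "(Y * S) $$ (i,j) = Y $$ (i,j) * S $$ (j,j)" .
    have "R $$ (i,i) * Y $$ (i,j) = Y $$ (i,j) * S $$ (j,j)"
      by (metis RY YS intertwine)
    then have "(R $$ (i,i) - S $$ (j,j)) * Y $$ (i,j) = 0" by (simp add: algebra_simps)
    then show ?case using distinct_diag[OF i j] by simp
  qed
  then show ?thesis using Y by (intro eq_matI) auto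
qed

lemma schur_triangularization:
  fixes A :: "complex mat"
  assumes A: "A \<in> carrier_mat n n"
  obtains R P Q where "similar_mat_wit A R P Q" "upper_triangular R"
    "\<And>i. i < n \<Longrightarrow> eigenvalue A (R $$ (i,i))"
proof -
  obtain es where es: "char_poly A = (\<Prod>e\<leftarrow>es. [:- e, 1:])"
    using char_poly_factorized[OF A] by blast
  obtain R P Q where RPQ: "schur_decomposition A es = (R, P, Q)" by (cases "schur_decomposition A es")
  note schur = schur_decomposition[OF A es RPQ]
  have R: "R \<in> carrier_mat n n" using schur A by (auto simp: similar_mat_wit_def Let_def)
  have "eigenvalue A (R $$ (i,i))" if "i < n" for i
  proof -
    have "R $$ (i,i) \<in> set es" using schur R that by (auto simp: diag_mat_def)
    then show ?thesis using A es by (simp add: eigenvalue_root_char_poly linear_poly_root)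
  qed
  then show ?thesis using that schur by blast
qed

lemma intertwiner_eq_zero:
  fixes A B X :: "complex mat"
  assumes A: "A \<in> carrier_mat n n" and B: "B \<in> carrier_mat m m" and X: "X \<in> carrier_mat n m"
    and intertwine: "A * X = X * B"
    and no_common: "\<And>c. eigenvalue A c \<Longrightarrow> eigenvalue B c \<Longrightarrow> False"
  shows "X = 0\<^sub>m n m"
proof -
  obtain R1 P1 Q1 where sim1: "similar_mat_wit A R1 P1 Q1" and tri1: "upper_triangular R1"
    and ev1: "\<And>i. i < n \<Longrightarrow> eigenvalue A (R1 $$ (i,i))"
    using schur_triangularization[OF A] by blast
  obtain R2 P2 Q2 where sim2: "similar_mat_wit B R2 P2 Q2" and tri2: "upper_triangular R2"
    and ev2: "\<And>j. j < m \<Longrightarrow> eigenvalue B (R2 $$ (j,j))"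
    using schur_triangularization[OF B] by blast
  note w1 = similar_mat_witD2[OF A sim1] and w2 = similar_mat_witD2[OF B sim2]
  note assoc = assoc_mult_mat[of _ n n _ n _ m] assoc_mult_mat[of _ n n _ m _ m]
    assoc_mult_mat[of _ n m _ m _ m] assoc_mult_mat[of _ m m _ m _ m]
  have cancel: "Q1 * (P1 * Z) = Z" "P1 * (Q1 * Z) = Z" if "dim_row Z = n" for Z
    using that w1 by (metis assoc_mult_mat carrier_mat_triv left_mult_one_mat)+
  define Y where "Y = Q1 * X * P2"
  have Y: "Y \<in> carrier_mat n m" using w1 w2 X by (simp add: Y_def)
  have "R1 * Y = Q1 * (A * X) * P2"
    using w1 w2 X by (simp add: Y_def cancel assoc)
  also have "\<dots> = Y * R2"
    using w1(5-7) w2 X by (simp add: Y_def intertwine assoc)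
  finally have intertwine_Y: "R1 * Y = Y * R2" .
  have "R1 $$ (i,i) \<noteq> R2 $$ (j,j)" if "i < n" "j < m" for i j
    using ev1[OF that(1)] ev2[OF that(2)] no_common by metis
  then have "Y = 0\<^sub>m n m"
    using upper_triangular_intertwiner_eq_zero[OF _ _ Y tri1 tri2 intertwine_Y] w1 w2 by blast
  moreover have "X = P1 * Y * Q2"
    using w1 w2 X by (simp add: Y_def cancel assoc)
  ultimately show ?thesis using w1 w2 by simp
qed

lemma vertex_enum_bij:
  assumes "finite U"
  shows "bij_betw (vertex_enum U) {..<card U} U"
proof -
  obtain e where "bij_betw e {..<card U} U"
    using ex_bij_betw_nat_finite[OF assms] by (auto simp: atLeast0LessThan)
  then show ?thesis
    unfolding vertex_enum_def by (rule someI[where P = "\<lambda>e. bij_betw e {..<card U} U"])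
qed

lemma sum_reindex_enum:
  fixes n :: nat
  shows "bij_betw e {..<n} S \<Longrightarrow> (\<Sum>j = 0..<n. g (e j)) = (\<Sum>u\<in>S. g u)"
  using sum.reindex_bij_betw[of e "{..<n}" S g] by (simp add: lessThan_atLeast0)

lemma mat_mult_reindex:
  assumes e: "bij_betw e {..<b} S"
  shows "mat a b (\<lambda>(i,k). F i (e k)) * mat b c (\<lambda>(k,j). G (e k) j)
       = mat a c (\<lambda>(i,j). \<Sum>u\<in>S. F i u * G u j)"
proof (rule eq_matI)
  fix i j assume "i < dim_row (mat a c (\<lambda>(i,j). \<Sum>u\<in>S. F i u * G u j))"
    and "j < dim_col (mat a c (\<lambda>(i,j). \<Sum>u\<in>S. F i u * G u j))"
  then show "(mat a b (\<lambda>(i,k). F i (e k)) * mat b c (\<lambda>(k,j). G (e k) j)) $$ (i,j)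
      = mat a c (\<lambda>(i,j). \<Sum>u\<in>S. F i u * G u j) $$ (i,j)"
    using sum_reindex_enum[OF e, of "\<lambda>u. F i u * G u j"] by (simp add: scalar_prod_def)
qed auto

lemma eigenvalue_mat_reindex_iff:
  fixes F :: "'a \<Rightarrow> 'a \<Rightarrow> 'k::comm_ring_1"
  assumes e: "bij_betw e {..<n} S"
  shows "eigenvalue (mat n n (\<lambda>(i,j). F (e i) (e j))) c \<longleftrightarrow>
    (\<exists>z. (\<exists>u\<in>S. z u \<noteq> 0) \<and> (\<forall>u\<in>S. (\<Sum>u'\<in>S. F u u' * z u') = c * z u))"
  (is "eigenvalue ?A c \<longleftrightarrow> _")
proof -
  have index: "inv_into {..<n} e u < n" "e (inv_into {..<n} e u) = u" if "u \<in> S" for u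
    using e that by (auto simp: bij_betw_def inv_into_into f_inv_into_f)
  have row: "(?A *\<^sub>v vec n (z \<circ> e)) $ i = (\<Sum>u'\<in>S. F (e i) u' * z u')" if "i < n" for z i
    using that sum_reindex_enum[OF e, of "\<lambda>u'. F (e i) u' * z u'"] by (simp add: scalar_prod_def)
  show ?thesis
  proof
    assume "eigenvalue ?A c"
    then obtain v where v: "v \<in> carrier_vec n" "v \<noteq> 0\<^sub>v n" "?A *\<^sub>v v = c \<cdot>\<^sub>v v"
      unfolding eigenvalue_def eigenvector_def by auto
    define z where "z = (\<lambda>u. v $ inv_into {..<n} e u)"
    have v_eq: "v = vec n (z \<circ> e)"
      using v(1) e by (auto simp: z_def bij_betw_def inv_into_f_f)
    obtain i where i: "i < n" "v $ i \<noteq> 0"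
      using v(1,2) by (metis carrier_vecD eq_vecI index_zero_vec)
    show "\<exists>z. (\<exists>u\<in>S. z u \<noteq> 0) \<and> (\<forall>u\<in>S. (\<Sum>u'\<in>S. F u u' * z u') = c * z u)"
    proof (intro exI[of _ z] conjI ballI)
      have "e i \<in> S" "z (e i) = v $ i"
        using e i(1) by (auto simp: z_def bij_betw_def inv_into_f_f)
      then show "\<exists>u\<in>S. z u \<noteq> 0"
        using i(2) by metis
      fix u assume u: "u \<in> S"
      show "(\<Sum>u'\<in>S. F u u' * z u') = c * z u"
        using row[of "inv_into {..<n} e u" z] index[OF u] v(3)[unfolded v_eq] by simp
    qed
  next
    assume "\<exists>z. (\<exists>u\<in>S. z u \<noteq> 0) \<and> (\<forall>u\<in>S. (\<Sum>u'\<in>S. F u u' * z u') = c * z u)"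
    then obtain z u0 where z: "u0 \<in> S" "z u0 \<noteq> 0" "\<forall>u\<in>S. (\<Sum>u'\<in>S. F u u' * z u') = c * z u"
      by blast
    have "vec n (z \<circ> e) \<noteq> 0\<^sub>v n"
      using index[OF z(1)] z(2) by (metis comp_apply index_vec index_zero_vec(1))
    moreover have "?A *\<^sub>v vec n (z \<circ> e) = c \<cdot>\<^sub>v vec n (z \<circ> e)"
    proof (rule eq_vecI)
      fix i assume "i < dim_vec (c \<cdot>\<^sub>v vec n (z \<circ> e))"
      then have "i < n" by simp
      then show "(?A *\<^sub>v vec n (z \<circ> e)) $ i = (c \<cdot>\<^sub>v vec n (z \<circ> e)) $ i"
        using row[of i z] z(3) e by (simp add: bij_betw_apply)
    qed simp
    ultimately show "eigenvalue ?A c"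
      unfolding eigenvalue_def eigenvector_def by (intro exI[of _ "vec n (z \<circ> e)"]) auto
  qed
qed

lemma kernel_intertwiner_eq_zero:
  fixes F :: "'a \<Rightarrow> 'a \<Rightarrow> complex" and G :: "'b \<Rightarrow> 'b \<Rightarrow> complex" and T :: "'a \<Rightarrow> 'b \<Rightarrow> complex"
  assumes fin: "finite U" "finite V"
    and intertwine: "\<And>u v. u \<in> U \<Longrightarrow> v \<in> V \<Longrightarrow>
      (\<Sum>u'\<in>U. F u u' * T u' v) = (\<Sum>v'\<in>V. T u v' * G v' v)"
    and no_common: "\<And>c z w. (\<exists>u\<in>U. z u \<noteq> 0) \<Longrightarrow> (\<forall>u\<in>U. (\<Sum>u'\<in>U. F u u' * z u') = c * z u) \<Longrightarrow>
      (\<exists>v\<in>V. w v \<noteq> 0) \<Longrightarrow> (\<forall>v\<in>V. (\<Sum>v'\<in>V. G v v' * w v') = c * w v) \<Longrightarrow> False"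
    and uv: "u \<in> U" "v \<in> V"
  shows "T u v = 0"
proof -
  define n m e f where "n = card U" and "m = card V" and "e = vertex_enum U" and "f = vertex_enum V"
  have e: "bij_betw e {..<n} U" and f: "bij_betw f {..<m} V"
    unfolding n_def m_def e_def f_def using vertex_enum_bij fin by blast+
  define A where "A = mat n n (\<lambda>(i,k). F (e i) (e k))"
  define B where "B = mat m m (\<lambda>(l,j). G (f l) (f j))"
  define X where "X = mat n m (\<lambda>(k,j). T (e k) (f j))"
  have "A * X = mat n m (\<lambda>(i,j). \<Sum>u'\<in>U. F (e i) u' * T u' (f j))"
    unfolding A_def X_def by (rule mat_mult_reindex[OF e])
  also have "\<dots> = mat n m (\<lambda>(i,j). \<Sum>v'\<in>V. T (e i) v' * G v' (f j))"
    using e f by (intro eq_matI) (auto simp: bij_betw_apply intertwine)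
  also have "\<dots> = X * B"
    unfolding B_def X_def by (rule mat_mult_reindex[OF f, symmetric])
  finally have "A * X = X * B" .
  moreover have False if "eigenvalue A c" "eigenvalue B c" for c
    using that no_common unfolding A_def B_def eigenvalue_mat_reindex_iff[OF e] eigenvalue_mat_reindex_iff[OF f]
    by blast
  ultimately have X_zero: "X = 0\<^sub>m n m"
    using intertwiner_eq_zero[of A n B m X] by (auto simp: A_def B_def X_def)
  obtain i j where ij: "i < n" "e i = u" "j < m" "f j = v"
    using uv bij_betw_imp_surj_on[OF e] bij_betw_imp_surj_on[OF f] by (auto simp: image_iff)
  then have "X $$ (i,j) = 0" using X_zero by simp
  then show ?thesis using ij by (simp add: X_def)
qed

section \<open>The spectrum of a connected graph\<close>

locale connected_weighted_graph =
  fixes U :: "'a set" and \<alpha> :: "'a \<Rightarrow> 'a \<Rightarrow> real"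
  assumes connected: "connected_graph U \<alpha>"
begin

abbreviation p :: "'a \<Rightarrow> real" where "p \<equiv> degree_fun U \<alpha>"

lemma finite_vertices: "finite U"
  using connected by (simp add: connected_graph_def is_graph_def)

lemma weight_nonneg: "u \<in> U \<Longrightarrow> u' \<in> U \<Longrightarrow> 0 \<le> \<alpha> u u'"
  using connected by (simp add: connected_graph_def is_graph_def weight_function_def)

lemma weight_sym: "u \<in> U \<Longrightarrow> u' \<in> U \<Longrightarrow> \<alpha> u u' = \<alpha> u' u"
  using connected by (simp add: connected_graph_def is_graph_def weight_function_def)

lemma sum_degree: "(\<Sum>u\<in>U. p u) = 1"
  using connected by (simp add: connected_graph_def is_graph_def weight_function_def degree_fun_def)

lemma degree_pos:
  assumes u: "u \<in> U"
  shows "0 < p u"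
proof (cases "U = {u}")
  case True
  then show ?thesis using sum_degree by simp
next
  case False
  then obtain u' where u': "u' \<in> U" "u' \<noteq> u" using u by blast
  then have "(edge_rel U \<alpha>)\<^sup>*\<^sup>* u u'"
    using connected u by (simp add: connected_graph_def)
  then obtain w where "edge_rel U \<alpha> u w"
    using u' by (metis converse_rtranclpE)
  then have "w \<in> U" "0 < \<alpha> u w" by (auto simp: edge_rel_def)
  moreover have "\<alpha> u w \<le> p u"
    unfolding degree_fun_def
    using \<open>w \<in> U\<close> u finite_vertices by (intro member_le_sum) (auto intro: weight_nonneg)
  ultimately show ?thesis by linarith
qed

lemma degree_nonzero: "u \<in> U \<Longrightarrow> p u \<noteq> 0"
  using degree_pos by force

text \<open>The eigen-equation of the transition matrix, multiplied through by the degree.\<close>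

definition eigenfun :: "'k::real_field \<Rightarrow> ('a \<Rightarrow> 'k) \<Rightarrow> bool" where
  "eigenfun c z \<longleftrightarrow> (\<forall>u\<in>U. (\<Sum>u'\<in>U. of_real (\<alpha> u u') * z u') = c * of_real (p u) * z u)"

definition graph_eigenvalue :: "'k::real_field \<Rightarrow> bool" where
  "graph_eigenvalue c \<longleftrightarrow> (\<exists>z. eigenfun c z \<and> (\<exists>u\<in>U. z u \<noteq> 0))"

lemma double_sum_weight:
  fixes z :: "'a \<Rightarrow> 'k::real_algebra_1"
  shows "(\<Sum>u\<in>U. \<Sum>u'\<in>U. of_real (\<alpha> u u') * z u') = (\<Sum>u\<in>U. of_real (p u) * z u)"
proof -
  have "(\<Sum>u\<in>U. \<Sum>u'\<in>U. of_real (\<alpha> u u') * z u') = (\<Sum>u'\<in>U. \<Sum>u\<in>U. of_real (\<alpha> u' u) * z u')"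
    by (subst sum.swap) (auto intro!: sum.cong simp: weight_sym)
  also have "\<dots> = (\<Sum>u'\<in>U. of_real (p u') * z u')"
    by (simp add: degree_fun_def sum_distrib_right)
  finally show ?thesis .
qed

lemma eigenfun_mean_zero:
  fixes z :: "'a \<Rightarrow> 'k::real_field"
  assumes "eigenfun c z" and "c \<noteq> 1"
  shows "(\<Sum>u\<in>U. of_real (p u) * z u) = 0"
proof -
  have "(\<Sum>u\<in>U. of_real (p u) * z u) = (\<Sum>u\<in>U. \<Sum>u'\<in>U. of_real (\<alpha> u u') * z u')"
    by (rule double_sum_weight[symmetric])
  also have "\<dots> = c * (\<Sum>u\<in>U. of_real (p u) * z u)"
    using assms(1) by (simp add: eigenfun_def sum_distrib_left mult.assoc)
  finally have "(1 - c) * (\<Sum>u\<in>U. of_real (p u) * z u) = 0"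
    by (simp add: algebra_simps)
  then show ?thesis using assms(2) by simp
qed

lemma eigenfun_affine_sum:
  fixes x :: "'a \<Rightarrow> real"
  assumes "eigenfun \<mu> x" "u \<in> U"
  shows "(\<Sum>u'\<in>U. \<alpha> u u' * (a + b * x u')) = p u * (a + b * \<mu> * x u)"
proof -
  have "(\<Sum>u'\<in>U. \<alpha> u u' * (a + b * x u')) = a * p u + b * (\<Sum>u'\<in>U. \<alpha> u u' * x u')"
    by (simp add: degree_fun_def algebra_simps sum.distrib sum_distrib_left sum_distrib_right)
  then show ?thesis using assms by (simp add: eigenfun_def algebra_simps)
qed

lemma eigenfun_energy:
  fixes x :: "'a \<Rightarrow> real"
  assumes "eigenfun \<mu> x"
  shows "(\<Sum>u\<in>U. \<Sum>u'\<in>U. \<alpha> u u' * (x u' - \<mu> * x u)\<^sup>2) = (1 - \<mu>\<^sup>2) * (\<Sum>u\<in>U. p u * (x u)\<^sup>2)"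
proof -
  have neighbours: "(\<Sum>u'\<in>U. \<alpha> u u' * x u') = \<mu> * p u * x u" if "u \<in> U" for u
    using assms that by (simp add: eigenfun_def)
  have "(\<Sum>u\<in>U. \<Sum>u'\<in>U. \<alpha> u u' * (x u' - \<mu> * x u)\<^sup>2)
      = (\<Sum>u\<in>U. \<Sum>u'\<in>U. \<alpha> u u' * (x u')\<^sup>2)
        - 2 * \<mu> * (\<Sum>u\<in>U. x u * (\<Sum>u'\<in>U. \<alpha> u u' * x u'))
        + \<mu>\<^sup>2 * (\<Sum>u\<in>U. (\<Sum>u'\<in>U. \<alpha> u u') * (x u)\<^sup>2)"
    by (simp add: power2_eq_square algebra_simps sum.distrib sum_subtractf sum_distrib_left sum_distrib_right)
  also have "\<dots> = (\<Sum>u\<in>U. p u * (x u)\<^sup>2) - 2 * \<mu> * (\<Sum>u\<in>U. \<mu> * (p u * (x u)\<^sup>2))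
        + \<mu>\<^sup>2 * (\<Sum>u\<in>U. p u * (x u)\<^sup>2)"
    using double_sum_weight[of "\<lambda>u. (x u)\<^sup>2"] neighbours
    by (simp add: degree_fun_def power2_eq_square algebra_simps)
  also have "\<dots> = (1 - \<mu>\<^sup>2) * (\<Sum>u\<in>U. p u * (x u)\<^sup>2)"
    by (simp add: sum_distrib_left[symmetric] power2_eq_square algebra_simps)
  finally show ?thesis .
qed

lemma weighted_square_sum_pos:
  fixes x :: "'a \<Rightarrow> real"
  assumes "u0 \<in> U" "x u0 \<noteq> 0"
  shows "0 < (\<Sum>u\<in>U. p u * (x u)\<^sup>2)"
  using assms finite_vertices degree_pos
  by (intro sum_pos2[where i = u0]) (auto simp: less_imp_le)

lemma energy_nonneg: "0 \<le> (\<Sum>u\<in>U. \<Sum>u'\<in>U. \<alpha> u u' * (x u' - \<mu> * x u)\<^sup>2)"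
  by (intro sum_nonneg mult_nonneg_nonneg) (auto intro: weight_nonneg)

lemma real_graph_eigenvalue_abs_le_one:
  fixes \<mu> :: real
  assumes "graph_eigenvalue \<mu>"
  shows "\<bar>\<mu>\<bar> \<le> 1"
proof -
  obtain x u0 where x: "eigenfun \<mu> x" "u0 \<in> U" "x u0 \<noteq> 0"
    using assms by (auto simp: graph_eigenvalue_def)
  have "0 \<le> (1 - \<mu>\<^sup>2) * (\<Sum>u\<in>U. p u * (x u)\<^sup>2)"
    using energy_nonneg[of x \<mu>] unfolding eigenfun_energy[OF x(1)] .
  with weighted_square_sum_pos[of u0 x, OF x(2,3)] have "\<mu>\<^sup>2 \<le> 1"
    by (simp add: zero_le_mult_iff)
  then show ?thesis by (simp add: abs_square_le_1)
qed

lemma eigenfun_unit_along_edge: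
  fixes x :: "'a \<Rightarrow> real"
  assumes x: "eigenfun \<mu> x" and unit: "\<mu>\<^sup>2 = 1"
    and edge: "u \<in> U" "u' \<in> U" "0 < \<alpha> u u'"
  shows "x u' = \<mu> * x u"
proof -
  define f where "f v v' = \<alpha> v v' * (x v' - \<mu> * x v)\<^sup>2" for v v'
  have f_nonneg: "0 \<le> f v v'" if "v \<in> U" "v' \<in> U" for v v'
    using that by (simp add: f_def weight_nonneg)
  have "(\<Sum>v\<in>U. \<Sum>v'\<in>U. f v v') = 0"
    using eigenfun_energy[OF x] unit by (simp add: f_def)
  then have "\<forall>v\<in>U. (\<Sum>v'\<in>U. f v v') = 0"
    using finite_vertices f_nonneg by (subst (asm) sum_nonneg_eq_0_iff) (auto intro: sum_nonneg)
  then have "(\<Sum>v'\<in>U. f u v') = 0"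
    using edge(1) by blast
  then have "f u u' = 0"
    using finite_vertices f_nonneg edge(1,2) by (subst (asm) sum_nonneg_eq_0_iff) auto
  then show ?thesis using edge(3) by (simp add: f_def)
qed

lemma eigenfun_one_const:
  fixes x :: "'a \<Rightarrow> real"
  assumes x: "eigenfun 1 x" and "u \<in> U" "u' \<in> U"
  shows "x u = x u'"
proof (cases "u = u'")
  case False
  have step: "x v = x v'" if "edge_rel U \<alpha> v v'" for v v'
    using eigenfun_unit_along_edge[OF x, of v v'] that by (simp add: edge_rel_def)
  have "(edge_rel U \<alpha>)\<^sup>*\<^sup>* u u'"
    using connected assms(2,3) False by (simp add: connected_graph_def)
  then show ?thesis
    by induction (auto dest: step)
qed simp

lemma eigenfun_complex_real:
  fixes z :: "'a \<Rightarrow> complex"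
  assumes z: "eigenfun c z" "u0 \<in> U" "z u0 \<noteq> 0"
  shows "c = of_real (Re c)"
proof -
  define E where "E = (\<Sum>u\<in>U. cnj (z u) * (\<Sum>u'\<in>U. of_real (\<alpha> u u') * z u'))"
  define N where "N = (\<Sum>u\<in>U. p u * (cmod (z u))\<^sup>2)"
  have "E = (\<Sum>u\<in>U. cnj (z u) * (c * of_real (p u) * z u))"
    using z(1) by (simp add: E_def eigenfun_def)
  also have "\<dots> = (\<Sum>u\<in>U. c * of_real (p u * (cmod (z u))\<^sup>2))"
    using complex_norm_square by (simp add: mult_ac)
  also have "\<dots> = c * of_real N"
    by (simp add: N_def sum_distrib_left del: of_real_mult of_real_power)
  finally have E_eq: "E = c * of_real N" .
  have "cnj E = (\<Sum>u\<in>U. \<Sum>u'\<in>U. of_real (\<alpha> u u') * (z u * cnj (z u')))"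
    by (simp add: E_def sum_distrib_left mult_ac)
  also have "\<dots> = E"
    unfolding E_def sum_distrib_left
    by (subst sum.swap) (auto intro!: sum.cong simp: weight_sym mult_ac)
  finally have "Im (cnj E) = Im E" by simp
  then have "Im E = 0" by simp
  moreover have "0 < N"
    unfolding N_def using weighted_square_sum_pos[of u0 "\<lambda>u. cmod (z u)"] z(2,3) by simp
  ultimately show ?thesis using E_eq by (simp add: complex_eq_iff)
qed

lemma eigenfun_Re_Im:
  fixes z :: "'a \<Rightarrow> complex"
  assumes "eigenfun (of_real \<mu>) z"
  shows "eigenfun \<mu> (\<lambda>u. Re (z u))" and "eigenfun \<mu> (\<lambda>u. Im (z u))"
proof -
  have eq: "(\<Sum>u'\<in>U. of_real (\<alpha> u u') * z u') = of_real (\<mu> * p u) * z u" if "u \<in> U" for u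
    using assms that by (simp add: eigenfun_def)
  show "eigenfun \<mu> (\<lambda>u. Re (z u))"
    unfolding eigenfun_def using arg_cong[where f = Re, OF eq] by simp
  show "eigenfun \<mu> (\<lambda>u. Im (z u))"
    unfolding eigenfun_def using arg_cong[where f = Im, OF eq] by simp
qed

lemma complex_graph_eigenvalue_real:
  fixes c :: complex
  assumes "graph_eigenvalue c"
  shows "c = of_real (Re c)" and "graph_eigenvalue (Re c)"
proof -
  obtain z u0 where z: "eigenfun c z" "u0 \<in> U" "z u0 \<noteq> 0"
    using assms by (auto simp: graph_eigenvalue_def)
  show real: "c = of_real (Re c)" by (rule eigenfun_complex_real[OF z])
  then have "eigenfun (Re c) (\<lambda>u. Re (z u))" "eigenfun (Re c) (\<lambda>u. Im (z u))"
    using eigenfun_Re_Im[of "Re c" z] z(1) by simp_all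
  moreover have "Re (z u0) \<noteq> 0 \<or> Im (z u0) \<noteq> 0"
    using z(3) complex_eq_iff by auto
  ultimately show "graph_eigenvalue (Re c)"
    unfolding graph_eigenvalue_def using z(2) by blast
qed

lemma complex_eigenfun_one_const:
  fixes z :: "'a \<Rightarrow> complex"
  assumes "eigenfun 1 z" "u \<in> U" "u' \<in> U"
  shows "z u = z u'"
proof -
  have "eigenfun 1 (\<lambda>u. Re (z u))" "eigenfun 1 (\<lambda>u. Im (z u))"
    using eigenfun_Re_Im[of 1 z] assms(1) by simp_all
  then have "Re (z u) = Re (z u')" "Im (z u) = Im (z u')"
    using eigenfun_one_const assms(2,3) by blast+
  then show ?thesis by (simp add: complex_eq_iff)
qed

lemma eigenvalue_transition_matrix_iff:
  "eigenvalue (map_mat complex_of_real (transition_matrix U \<alpha>)) c \<longleftrightarrow> graph_eigenvalue c"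
proof -
  let ?e = "vertex_enum U"
  define F where "F u u' = complex_of_real (\<alpha> u u' / p u)" for u u'
  have "map_mat complex_of_real (transition_matrix U \<alpha>) = mat (card U) (card U) (\<lambda>(i,j). F (?e i) (?e j))"
    by (rule eq_matI) (auto simp: transition_matrix_def F_def)
  then have "eigenvalue (map_mat complex_of_real (transition_matrix U \<alpha>)) c \<longleftrightarrow>
      (\<exists>z. (\<exists>u\<in>U. z u \<noteq> 0) \<and> (\<forall>u\<in>U. (\<Sum>u'\<in>U. F u u' * z u') = c * z u))"
    by (simp add: eigenvalue_mat_reindex_iff[OF vertex_enum_bij[OF finite_vertices]])
  moreover have "(\<Sum>u'\<in>U. F u u' * z u') = c * z u \<longleftrightarrow>
      (\<Sum>u'\<in>U. of_real (\<alpha> u u') * z u') = c * of_real (p u) * z u" if "u \<in> U" for u z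
    using degree_pos[OF that]
    by (simp add: F_def sum_divide_distrib[symmetric] divide_eq_eq mult_ac)
  ultimately show ?thesis
    unfolding graph_eigenvalue_def eigenfun_def by auto
qed

lemma deflated_eigenfun:
  fixes z :: "'a \<Rightarrow> 'k::real_field"
  assumes eq: "\<forall>u\<in>U. (\<Sum>u'\<in>U. of_real (\<alpha> u u' / p u + k * p u') * z u') = c * z u"
    and c: "c \<noteq> of_real (1 + k)"
  shows "eigenfun c z" and "(\<Sum>u\<in>U. of_real (p u) * z u) = 0"
proof -
  define s where "s = (\<Sum>u\<in>U. of_real (p u) * z u)"
  have split: "(\<Sum>u'\<in>U. of_real (\<alpha> u u') * z u') = of_real (p u) * (c * z u - of_real k * s)"
    if u: "u \<in> U" for u
  proof -
    have "(\<Sum>u'\<in>U. of_real (\<alpha> u u' / p u + k * p u') * z u')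
        = (\<Sum>u'\<in>U. of_real (\<alpha> u u') * z u') / of_real (p u) + of_real k * s"
      unfolding s_def of_real_add of_real_mult of_real_divide distrib_right sum.distrib
      by (simp add: sum_divide_distrib sum_distrib_left mult_ac)
    then have "c * z u = (\<Sum>u'\<in>U. of_real (\<alpha> u u') * z u') / of_real (p u) + of_real k * s"
      using eq u by simp
    moreover have "of_real (p u) \<noteq> (0::'k)" using degree_pos[OF u] by simp
    ultimately show ?thesis by (simp add: field_simps)
  qed
  have "s = (\<Sum>u\<in>U. \<Sum>u'\<in>U. of_real (\<alpha> u u') * z u')"
    unfolding s_def by (rule double_sum_weight[symmetric])
  also have "\<dots> = (\<Sum>u\<in>U. of_real (p u) * (c * z u - of_real k * s))"
    using split by simp
  also have "\<dots> = c * (\<Sum>u\<in>U. of_real (p u) * z u) - of_real (\<Sum>u\<in>U. p u) * (of_real k * s)"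
    by (simp add: sum_subtractf sum_distrib_left sum_distrib_right algebra_simps)
  also have "\<dots> = c * s - of_real k * s"
    by (simp add: s_def sum_degree)
  finally have "(c - of_real (1 + k)) * s = 0"
    by (simp add: algebra_simps)
  then show mean_zero: "(\<Sum>u\<in>U. of_real (p u) * z u) = 0"
    using c by (simp add: s_def)
  show "eigenfun c z"
    using split mean_zero by (simp add: eigenfun_def s_def mult_ac)
qed

end

section \<open>Perturbed product joinings\<close>

definition perturbed_product ::
  "('a \<Rightarrow> 'a \<Rightarrow> real) \<Rightarrow> ('b \<Rightarrow> 'b \<Rightarrow> real) \<Rightarrow> real \<Rightarrow> ('a \<Rightarrow> 'b \<Rightarrow> 'a \<Rightarrow> 'b \<Rightarrow> real)
   \<Rightarrow> 'a \<times> 'b \<Rightarrow> 'a \<times> 'b \<Rightarrow> real" where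
  "perturbed_product \<alpha> \<beta> \<epsilon> \<phi> x y =
     \<alpha> (fst x) (fst y) * \<beta> (snd x) (snd y) * (1 + \<epsilon> * \<phi> (fst x) (snd x) (fst y) (snd y))"

locale connected_weighted_graph_pair = G: connected_weighted_graph U \<alpha> + H: connected_weighted_graph V \<beta>
  for U :: "'a set" and \<alpha> and V :: "'b set" and \<beta>
begin

abbreviation p :: "'a \<Rightarrow> real" where "p \<equiv> degree_fun U \<alpha>"
abbreviation q :: "'b \<Rightarrow> real" where "q \<equiv> degree_fun V \<beta>"

context
  fixes \<phi> :: "'a \<Rightarrow> 'b \<Rightarrow> 'a \<Rightarrow> 'b \<Rightarrow> real" and \<psi> :: "'a \<Rightarrow> 'b \<Rightarrow> real"
  assumes sum_snd: "\<And>u u' v. u \<in> U \<Longrightarrow> u' \<in> U \<Longrightarrow> v \<in> V \<Longrightarrow>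
      \<alpha> u u' * (\<Sum>v'\<in>V. \<beta> v v' * \<phi> u v u' v') = \<alpha> u u' * (q v * \<psi> u v)"
    and sum_fst: "\<And>u v v'. u \<in> U \<Longrightarrow> v \<in> V \<Longrightarrow> v' \<in> V \<Longrightarrow>
      \<beta> v v' * (\<Sum>u'\<in>U. \<alpha> u u' * \<phi> u v u' v') = \<beta> v v' * (p u * \<psi> u v)"
begin

lemma perturbed_product_sum_snd:
  assumes "u \<in> U" "u' \<in> U" "v \<in> V"
  shows "(\<Sum>w\<in>V. perturbed_product \<alpha> \<beta> \<epsilon> \<phi> (u,v) (u',w)) = \<alpha> u u' * (q v * (1 + \<epsilon> * \<psi> u v))"
proof -
  have "(\<Sum>w\<in>V. perturbed_product \<alpha> \<beta> \<epsilon> \<phi> (u,v) (u',w))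
      = \<alpha> u u' * (\<Sum>w\<in>V. \<beta> v w) + \<epsilon> * (\<alpha> u u' * (\<Sum>w\<in>V. \<beta> v w * \<phi> u v u' w))"
    by (simp add: perturbed_product_def algebra_simps sum.distrib sum_distrib_left)
  then show ?thesis
    using sum_snd[OF assms] by (simp add: degree_fun_def algebra_simps)
qed

lemma perturbed_product_sum_fst:
  assumes "u \<in> U" "v \<in> V" "v' \<in> V"
  shows "(\<Sum>w\<in>U. perturbed_product \<alpha> \<beta> \<epsilon> \<phi> (u,v) (w,v')) = \<beta> v v' * (p u * (1 + \<epsilon> * \<psi> u v))"
proof -
  have "(\<Sum>w\<in>U. perturbed_product \<alpha> \<beta> \<epsilon> \<phi> (u,v) (w,v'))
      = \<beta> v v' * (\<Sum>w\<in>U. \<alpha> u w) + \<epsilon> * (\<beta> v v' * (\<Sum>w\<in>U. \<alpha> u w * \<phi> u v w v'))"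
    by (simp add: perturbed_product_def algebra_simps sum.distrib sum_distrib_left)
  then show ?thesis
    using sum_fst[OF assms] by (simp add: degree_fun_def algebra_simps)
qed

lemma degree_perturbed_product:
  assumes "u \<in> U" "v \<in> V"
  shows "degree_fun (U \<times> V) (perturbed_product \<alpha> \<beta> \<epsilon> \<phi>) (u,v) = p u * q v * (1 + \<epsilon> * \<psi> u v)"
proof -
  have "degree_fun (U \<times> V) (perturbed_product \<alpha> \<beta> \<epsilon> \<phi>) (u,v)
      = (\<Sum>u'\<in>U. \<Sum>w\<in>V. perturbed_product \<alpha> \<beta> \<epsilon> \<phi> (u,v) (u',w))"
    by (simp add: degree_fun_def sum.cartesian_product)
  also have "\<dots> = (\<Sum>u'\<in>U. \<alpha> u u' * (q v * (1 + \<epsilon> * \<psi> u v)))"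
    using assms by (intro sum.cong) (simp_all add: perturbed_product_sum_snd)
  also have "\<dots> = p u * q v * (1 + \<epsilon> * \<psi> u v)"
    by (simp add: degree_fun_def sum_distrib_right mult.assoc)
  finally show ?thesis .
qed

lemma sum_snd_degree_perturbed_product:
  assumes "u \<in> U" and mean_snd: "(\<Sum>v\<in>V. q v * \<psi> u v) = 0"
  shows "(\<Sum>v\<in>V. degree_fun (U \<times> V) (perturbed_product \<alpha> \<beta> \<epsilon> \<phi>) (u,v)) = p u"
proof -
  have "(\<Sum>v\<in>V. degree_fun (U \<times> V) (perturbed_product \<alpha> \<beta> \<epsilon> \<phi>) (u,v))
      = p u * ((\<Sum>v\<in>V. q v) + \<epsilon> * (\<Sum>v\<in>V. q v * \<psi> u v))"
    using assms(1) by (simp add: degree_perturbed_product algebra_simps sum.distrib sum_distrib_left)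
  then show ?thesis using mean_snd H.sum_degree by simp
qed

lemma sum_fst_degree_perturbed_product:
  assumes "v \<in> V" and mean_fst: "(\<Sum>u\<in>U. p u * \<psi> u v) = 0"
  shows "(\<Sum>u\<in>U. degree_fun (U \<times> V) (perturbed_product \<alpha> \<beta> \<epsilon> \<phi>) (u,v)) = q v"
proof -
  have "(\<Sum>u\<in>U. degree_fun (U \<times> V) (perturbed_product \<alpha> \<beta> \<epsilon> \<phi>) (u,v))
      = q v * ((\<Sum>u\<in>U. p u) + \<epsilon> * (\<Sum>u\<in>U. p u * \<psi> u v))"
    using assms(1) by (simp add: degree_perturbed_product algebra_simps sum.distrib sum_distrib_left)
  then show ?thesis using mean_fst G.sum_degree by simp
qed

lemma perturbed_product_joining:
  assumes sym: "\<And>u u' v v'. u \<in> U \<Longrightarrow> u' \<in> U \<Longrightarrow> v \<in> V \<Longrightarrow> v' \<in> V \<Longrightarrow>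
      \<alpha> u u' * \<beta> v v' * \<phi> u v u' v' = \<alpha> u u' * \<beta> v v' * \<phi> u' v' u v"
    and mean_snd: "\<And>u. u \<in> U \<Longrightarrow> (\<Sum>v\<in>V. q v * \<psi> u v) = 0"
    and mean_fst: "\<And>v. v \<in> V \<Longrightarrow> (\<Sum>u\<in>U. p u * \<psi> u v) = 0"
    and nonneg: "\<And>u u' v v'. u \<in> U \<Longrightarrow> u' \<in> U \<Longrightarrow> v \<in> V \<Longrightarrow> v' \<in> V \<Longrightarrow>
      0 \<le> 1 + \<epsilon> * \<phi> u v u' v'"
  shows "weight_joining U \<alpha> V \<beta> (perturbed_product \<alpha> \<beta> \<epsilon> \<phi>)"
proof -
  let ?\<gamma> = "perturbed_product \<alpha> \<beta> \<epsilon> \<phi>"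
  note marg_snd = sum_snd_degree_perturbed_product[OF _ mean_snd]
    and marg_fst = sum_fst_degree_perturbed_product[OF _ mean_fst]
  have "weight_function (U \<times> V) ?\<gamma>"
    unfolding weight_function_def
  proof (intro conjI ballI)
    fix x y assume "x \<in> U \<times> V" "y \<in> U \<times> V"
    then obtain u v u' v' where xy: "x = (u,v)" "y = (u',v')"
      and uv: "u \<in> U" "v \<in> V" "u' \<in> U" "v' \<in> V" by auto
    show "0 \<le> ?\<gamma> x y"
      using G.weight_nonneg H.weight_nonneg nonneg uv by (simp add: xy perturbed_product_def)
    have "\<alpha> u u' * \<beta> v v' * \<phi> u v u' v' = \<alpha> u' u * \<beta> v' v * \<phi> u' v' u v"
      using sym[of u u' v v'] uv by (simp add: G.weight_sym[of u u'] H.weight_sym[of v v'])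
    then show "?\<gamma> x y = ?\<gamma> y x"
      using uv by (simp add: xy perturbed_product_def algebra_simps G.weight_sym[of u u'] H.weight_sym[of v v'])
  next
    have "(\<Sum>x\<in>U \<times> V. \<Sum>y\<in>U \<times> V. ?\<gamma> x y) = (\<Sum>x\<in>U \<times> V. degree_fun (U \<times> V) ?\<gamma> x)"
      by (simp add: degree_fun_def)
    also have "\<dots> = (\<Sum>u\<in>U. \<Sum>v\<in>V. degree_fun (U \<times> V) ?\<gamma> (u,v))"
      by (simp add: sum.cartesian_product)
    finally show "(\<Sum>x\<in>U \<times> V. \<Sum>y\<in>U \<times> V. ?\<gamma> x y) = 1"
      using marg_snd G.sum_degree by simp
  qed
  then show ?thesis
    unfolding weight_joining_def
    using marg_snd marg_fst perturbed_product_sum_snd perturbed_product_sum_fst degree_perturbed_product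
    by (simp add: algebra_simps)
qed

lemma perturbation_not_weakly_disjoint:
  assumes sym: "\<And>u u' v v'. u \<in> U \<Longrightarrow> u' \<in> U \<Longrightarrow> v \<in> V \<Longrightarrow> v' \<in> V \<Longrightarrow>
      \<alpha> u u' * \<beta> v v' * \<phi> u v u' v' = \<alpha> u u' * \<beta> v v' * \<phi> u' v' u v"
    and mean_snd: "\<And>u. u \<in> U \<Longrightarrow> (\<Sum>v\<in>V. q v * \<psi> u v) = 0"
    and mean_fst: "\<And>v. v \<in> V \<Longrightarrow> (\<Sum>u\<in>U. p u * \<psi> u v) = 0"
    and nonzero: "u0 \<in> U" "v0 \<in> V" "\<psi> u0 v0 \<noteq> 0"
  shows "\<not> weakly_disjoint U \<alpha> V \<beta>"
proof
  assume disjoint: "weakly_disjoint U \<alpha> V \<beta>"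
  define K where "K = (\<Sum>(u,v,u',v')\<in>U \<times> V \<times> U \<times> V. \<bar>\<phi> u v u' v'\<bar>)"
  define \<epsilon> where "\<epsilon> = 1 / (K + 1)"
  have finite: "finite (U \<times> V \<times> U \<times> V)"
    using G.finite_vertices H.finite_vertices by simp
  have K_ge: "\<bar>\<phi> u v u' v'\<bar> \<le> K" if "u \<in> U" "v \<in> V" "u' \<in> U" "v' \<in> V" for u v u' v'
  proof -
    have "\<bar>\<phi> u v u' v'\<bar> = (\<lambda>(u,v,u',v'). \<bar>\<phi> u v u' v'\<bar>) (u,v,u',v')" by simp
    also have "\<dots> \<le> K"
      unfolding K_def by (rule member_le_sum) (use that finite in \<open>auto split: prod.splits\<close>)
    finally show ?thesis .
  qed
  have K_pos: "0 < K + 1"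
    unfolding K_def by (simp add: add_nonneg_pos sum_nonneg split_def)
  have "0 \<le> 1 + \<epsilon> * \<phi> u v u' v'" if "u \<in> U" "u' \<in> U" "v \<in> V" "v' \<in> V" for u u' v v'
  proof -
    have "- (K + 1) \<le> \<phi> u v u' v'" using K_ge[of u v u' v'] that by linarith
    then show ?thesis using K_pos by (simp add: \<epsilon>_def field_simps)
  qed
  then have "perturbed_product \<alpha> \<beta> \<epsilon> \<phi> \<in> graph_joinings U \<alpha> V \<beta>"
    unfolding graph_joinings_def using perturbed_product_joining[OF sym mean_snd mean_fst] by blast
  then have "p u0 * q v0 * (1 + \<epsilon> * \<psi> u0 v0) = p u0 * q v0"
    using disjoint nonzero degree_perturbed_product[of u0 v0 \<epsilon>] unfolding weakly_disjoint_def by metis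
  moreover have "0 < p u0" "0 < q v0" "\<epsilon> \<noteq> 0"
    using G.degree_pos[OF nonzero(1)] H.degree_pos[OF nonzero(2)] K_pos by (simp_all add: \<epsilon>_def)
  ultimately show False using nonzero(3) by simp
qed

end

lemma product_mean_zero:
  fixes x :: "'a \<Rightarrow> real" and y :: "'b \<Rightarrow> real"
  assumes "G.eigenfun \<mu> x" "H.eigenfun \<mu> y" "\<mu> \<noteq> 1"
  shows "(\<Sum>v\<in>V. q v * (k * (x u * y v))) = 0" and "(\<Sum>u\<in>U. p u * (k * (x u * y v))) = 0"
proof -
  have "(\<Sum>u\<in>U. p u * x u) = 0" "(\<Sum>v\<in>V. q v * y v) = 0"
    using G.eigenfun_mean_zero[OF assms(1,3)] H.eigenfun_mean_zero[OF assms(2,3)] by simp_all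
  moreover have "(\<Sum>v\<in>V. q v * (k * (x u * y v))) = k * x u * (\<Sum>v\<in>V. q v * y v)"
    and "(\<Sum>u\<in>U. p u * (k * (x u * y v))) = k * y v * (\<Sum>u\<in>U. p u * x u)"
    by (simp_all add: sum_distrib_left mult_ac)
  ultimately show "(\<Sum>v\<in>V. q v * (k * (x u * y v))) = 0" "(\<Sum>u\<in>U. p u * (k * (x u * y v))) = 0"
    by simp_all
qed

lemma eigenvalue_minus_one_not_weakly_disjoint:
  fixes x :: "'a \<Rightarrow> real" and y :: "'b \<Rightarrow> real"
  assumes x: "G.eigenfun (-1) x" "u0 \<in> U" "x u0 \<noteq> 0"
    and y: "H.eigenfun (-1) y" "v0 \<in> V" "y v0 \<noteq> 0"
  shows "\<not> weakly_disjoint U \<alpha> V \<beta>"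
proof -
  define \<phi> :: "'a \<Rightarrow> 'b \<Rightarrow> 'a \<Rightarrow> 'b \<Rightarrow> real" where "\<phi> u v u' v' = x u * y v" for u v u' v'
  have sum_snd: "\<alpha> u u' * (\<Sum>v'\<in>V. \<beta> v v' * \<phi> u v u' v') = \<alpha> u u' * (q v * (x u * y v))" for u u' v
    by (simp add: \<phi>_def degree_fun_def sum_distrib_right)
  have sum_fst: "\<beta> v v' * (\<Sum>u'\<in>U. \<alpha> u u' * \<phi> u v u' v') = \<beta> v v' * (p u * (x u * y v))" for u v v'
    by (simp add: \<phi>_def degree_fun_def sum_distrib_right)
  have sym: "\<alpha> u u' * \<beta> v v' * \<phi> u v u' v' = \<alpha> u u' * \<beta> v v' * \<phi> u' v' u v"
    if "u \<in> U" "u' \<in> U" "v \<in> V" "v' \<in> V" for u u' v v'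
  proof (cases "0 < \<alpha> u u' \<and> 0 < \<beta> v v'")
    case True
    then have "x u' = - x u" "y v' = - y v"
      using G.eigenfun_unit_along_edge[OF x(1)] H.eigenfun_unit_along_edge[OF y(1)] that by simp_all
    then show ?thesis by (simp add: \<phi>_def)
  next
    case False
    then have "\<alpha> u u' = 0 \<or> \<beta> v v' = 0"
      using G.weight_nonneg[of u u'] H.weight_nonneg[of v v'] that by linarith
    then show ?thesis by auto
  qed
  have "(\<Sum>v\<in>V. q v * (x u * y v)) = 0" "(\<Sum>u\<in>U. p u * (x u * y v)) = 0" for u v
    using product_mean_zero[OF x(1) y(1), where k = 1] by simp_all
  with sum_snd sum_fst sym show ?thesis
    by (intro perturbation_not_weakly_disjoint[where \<phi> = \<phi> and \<psi> = "\<lambda>u v. x u * y v", OF _ _ _ _ _ x(2) y(2)])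
      (simp_all add: x(3) y(3))
qed

lemma eigenvalue_non_unit_not_weakly_disjoint:
  fixes x :: "'a \<Rightarrow> real" and y :: "'b \<Rightarrow> real"
  assumes x: "G.eigenfun \<mu> x" "u0 \<in> U" "x u0 \<noteq> 0"
    and y: "H.eigenfun \<mu> y" "v0 \<in> V" "y v0 \<noteq> 0"
    and non_unit: "\<mu>\<^sup>2 \<noteq> 1"
  shows "\<not> weakly_disjoint U \<alpha> V \<beta>"
proof -
  define \<phi> :: "'a \<Rightarrow> 'b \<Rightarrow> 'a \<Rightarrow> 'b \<Rightarrow> real"
    where "\<phi> u v u' v' = x u * y v + x u' * y v' - \<mu> * (x u * y v' + x u' * y v)" for u v u' v'
  define \<psi> where "\<psi> u v = (1 - \<mu>\<^sup>2) * (x u * y v)" for u v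
  have sum_snd: "\<alpha> u u' * (\<Sum>v'\<in>V. \<beta> v v' * \<phi> u v u' v') = \<alpha> u u' * (q v * \<psi> u v)"
    if "v \<in> V" for u u' v
  proof -
    have "(\<Sum>v'\<in>V. \<beta> v v' * \<phi> u v u' v')
        = (\<Sum>v'\<in>V. \<beta> v v' * ((x u * y v - \<mu> * x u' * y v) + (x u' - \<mu> * x u) * y v'))"
      by (simp add: \<phi>_def algebra_simps)
    also have "\<dots> = q v * ((x u * y v - \<mu> * x u' * y v) + (x u' - \<mu> * x u) * \<mu> * y v)"
      by (rule H.eigenfun_affine_sum[OF y(1) that])
    also have "\<dots> = q v * \<psi> u v"
      by (simp add: \<psi>_def power2_eq_square algebra_simps)
    finally show ?thesis by simp
  qed
  have sum_fst: "\<beta> v v' * (\<Sum>u'\<in>U. \<alpha> u u' * \<phi> u v u' v') = \<beta> v v' * (p u * \<psi> u v)"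
    if "u \<in> U" for u v v'
  proof -
    have "(\<Sum>u'\<in>U. \<alpha> u u' * \<phi> u v u' v')
        = (\<Sum>u'\<in>U. \<alpha> u u' * ((x u * y v - \<mu> * x u * y v') + (y v' - \<mu> * y v) * x u'))"
      by (simp add: \<phi>_def algebra_simps)
    also have "\<dots> = p u * ((x u * y v - \<mu> * x u * y v') + (y v' - \<mu> * y v) * \<mu> * x u)"
      by (rule G.eigenfun_affine_sum[OF x(1) that])
    also have "\<dots> = p u * \<psi> u v"
      by (simp add: \<psi>_def power2_eq_square algebra_simps)
    finally show ?thesis by simp
  qed
  have sym: "\<phi> u v u' v' = \<phi> u' v' u v" for u v u' v'
    by (simp add: \<phi>_def algebra_simps)
  have "\<mu> \<noteq> 1" using non_unit by auto
  then have "(\<Sum>v\<in>V. q v * \<psi> u v) = 0" "(\<Sum>u\<in>U. p u * \<psi> u v) = 0" for u v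
    unfolding \<psi>_def using product_mean_zero[OF x(1) y(1)] by blast+
  moreover have "\<psi> u0 v0 \<noteq> 0"
    using x(3) y(3) non_unit by (simp add: \<psi>_def)
  ultimately show ?thesis
    using sum_snd sum_fst sym
    by (intro perturbation_not_weakly_disjoint[where \<phi> = \<phi> and \<psi> = \<psi>, OF _ _ _ _ _ x(2) y(2)]) simp_all
qed

lemma common_eigenvalue_not_weakly_disjoint:
  fixes c :: complex
  assumes "G.graph_eigenvalue c" "H.graph_eigenvalue c" "c \<noteq> 1"
  shows "\<not> weakly_disjoint U \<alpha> V \<beta>"
proof -
  define \<mu> where "\<mu> = Re c"
  have "\<mu> \<noteq> 1"
    using G.complex_graph_eigenvalue_real(1)[OF assms(1)] assms(3) by (auto simp: \<mu>_def)
  obtain x u0 y v0 where x: "G.eigenfun \<mu> x" "u0 \<in> U" "x u0 \<noteq> 0"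
    and y: "H.eigenfun \<mu> y" "v0 \<in> V" "y v0 \<noteq> 0"
    using G.complex_graph_eigenvalue_real(2)[OF assms(1)] H.complex_graph_eigenvalue_real(2)[OF assms(2)]
    unfolding \<mu>_def G.graph_eigenvalue_def H.graph_eigenvalue_def by blast
  show ?thesis
  proof (cases "\<mu> = -1")
    case True
    then show ?thesis using eigenvalue_minus_one_not_weakly_disjoint x y by blast
  next
    case False
    with \<open>\<mu> \<noteq> 1\<close> have "\<mu>\<^sup>2 \<noteq> 1" by (simp add: power2_eq_1_iff)
    then show ?thesis using eigenvalue_non_unit_not_weakly_disjoint[OF x y] by blast
  qed
qed

section \<open>Joinings of graphs without common eigenvalues\<close>

definition joining_defect :: "('a \<times> 'b \<Rightarrow> 'a \<times> 'b \<Rightarrow> real) \<Rightarrow> 'a \<Rightarrow> 'b \<Rightarrow> real" where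
  "joining_defect \<gamma> u v = degree_fun (U \<times> V) \<gamma> (u,v) / p u - q v"

context
  fixes \<gamma> :: "'a \<times> 'b \<Rightarrow> 'a \<times> 'b \<Rightarrow> real"
  assumes joining: "weight_joining U \<alpha> V \<beta> \<gamma>"
begin

lemma joining_transition_balance:
  assumes u': "u' \<in> U" and v: "v \<in> V"
  shows "(\<Sum>u\<in>U. \<alpha> u' u * (degree_fun (U \<times> V) \<gamma> (u,v) / p u))
       = (\<Sum>v'\<in>V. degree_fun (U \<times> V) \<gamma> (u',v') * \<beta> v' v / q v')"
proof -
  let ?r = "\<lambda>u v. degree_fun (U \<times> V) \<gamma> (u,v)"
  have sym: "\<gamma> x y = \<gamma> y x" if "x \<in> U \<times> V" "y \<in> U \<times> V" for x y
    using joining that unfolding weight_joining_def weight_function_def by blast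
  have "(\<Sum>u\<in>U. \<alpha> u' u * (?r u v / p u)) = (\<Sum>u\<in>U. \<Sum>v'\<in>V. \<gamma> (u,v) (u',v'))"
  proof (rule sum.cong)
    fix u assume u: "u \<in> U"
    have "p u * (\<Sum>v'\<in>V. \<gamma> (u,v) (u',v')) = \<alpha> u u' * ?r u v"
      using joining u u' v by (simp add: weight_joining_def)
    then show "\<alpha> u' u * (?r u v / p u) = (\<Sum>v'\<in>V. \<gamma> (u,v) (u',v'))"
      using G.degree_pos[OF u] G.weight_sym[OF u u'] by (simp add: field_simps)
  qed simp
  also have "\<dots> = (\<Sum>v'\<in>V. \<Sum>u\<in>U. \<gamma> (u',v') (u,v))"
    using u' v by (subst sum.swap) (auto intro!: sum.cong sym)
  also have "\<dots> = (\<Sum>v'\<in>V. ?r u' v' * \<beta> v' v / q v')"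
  proof (rule sum.cong)
    fix v' assume v': "v' \<in> V"
    have "q v' * (\<Sum>u\<in>U. \<gamma> (u',v') (u,v)) = \<beta> v' v * ?r u' v'"
      using joining u' v v' by (simp add: weight_joining_def)
    then show "(\<Sum>u\<in>U. \<gamma> (u',v') (u,v)) = ?r u' v' * \<beta> v' v / q v'"
      using H.degree_pos[OF v'] by (simp add: field_simps)
  qed simp
  finally show ?thesis .
qed

lemma joining_defect_sum_snd:
  assumes "u \<in> U"
  shows "(\<Sum>v\<in>V. joining_defect \<gamma> u v) = 0"
proof -
  have "(\<Sum>v\<in>V. joining_defect \<gamma> u v) = (\<Sum>v\<in>V. degree_fun (U \<times> V) \<gamma> (u,v)) / p u - (\<Sum>v\<in>V. q v)"
    by (simp add: joining_defect_def sum_subtractf sum_divide_distrib)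
  then show ?thesis
    using joining assms G.degree_pos[OF assms] H.sum_degree by (simp add: weight_joining_def)
qed

lemma joining_defect_sum_fst:
  assumes "v \<in> V"
  shows "(\<Sum>u\<in>U. p u * joining_defect \<gamma> u v) = 0"
proof -
  have "(\<Sum>u\<in>U. p u * joining_defect \<gamma> u v) = (\<Sum>u\<in>U. degree_fun (U \<times> V) \<gamma> (u,v) - q v * p u)"
    by (intro sum.cong) (auto simp: joining_defect_def field_simps G.degree_nonzero)
  also have "\<dots> = 0"
    using joining assms G.sum_degree by (simp add: weight_joining_def sum_subtractf flip: sum_distrib_left)
  finally show ?thesis .
qed

text \<open>The rank-one terms vanish on the defect by the two lemmas above; they move the eigenvalue \<open>1\<close>
  of the transition matrices to \<open>2\<close> and \<open>3\<close>.\<close>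

lemma joining_defect_intertwining:
  assumes u: "u \<in> U" and v: "v \<in> V"
  shows "(\<Sum>u'\<in>U. (\<alpha> u u' / p u + p u') * joining_defect \<gamma> u' v)
       = (\<Sum>v'\<in>V. joining_defect \<gamma> u v' * (\<beta> v' v / q v' + 2 * q v))"
proof -
  let ?r = "\<lambda>u v. degree_fun (U \<times> V) \<gamma> (u,v)"
  have "(\<Sum>u'\<in>U. (\<alpha> u u' / p u + p u') * joining_defect \<gamma> u' v)
      = (\<Sum>u'\<in>U. \<alpha> u u' * (?r u' v / p u')) / p u - q v * (\<Sum>u'\<in>U. \<alpha> u u') / p u
        + (\<Sum>u'\<in>U. p u' * joining_defect \<gamma> u' v)"
    by (simp add: joining_defect_def algebra_simps sum.distrib sum_subtractf sum_divide_distrib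
        sum_distrib_left add_divide_distrib diff_divide_distrib)
  also have "\<dots> = (\<Sum>u'\<in>U. \<alpha> u u' * (?r u' v / p u')) / p u - q v"
    using joining_defect_sum_fst[OF v] G.degree_pos[OF u] by (simp add: degree_fun_def)
  finally have lhs: "(\<Sum>u'\<in>U. (\<alpha> u u' / p u + p u') * joining_defect \<gamma> u' v)
      = (\<Sum>u'\<in>U. \<alpha> u u' * (?r u' v / p u')) / p u - q v" .
  have "(\<Sum>v'\<in>V. q v' * (\<beta> v' v / q v')) = q v"
    using H.weight_sym[OF _ v] unfolding degree_fun_def[of V \<beta> v]
    by (intro sum.cong) (auto simp: H.degree_nonzero)
  moreover have "(\<Sum>v'\<in>V. joining_defect \<gamma> u v' * (\<beta> v' v / q v' + 2 * q v))
      = (\<Sum>v'\<in>V. ?r u v' * \<beta> v' v / q v') / p u - (\<Sum>v'\<in>V. q v' * (\<beta> v' v / q v'))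
        + 2 * q v * (\<Sum>v'\<in>V. joining_defect \<gamma> u v')"
    by (simp add: joining_defect_def algebra_simps sum.distrib sum_subtractf sum_divide_distrib
        sum_distrib_left)
  ultimately have "(\<Sum>v'\<in>V. joining_defect \<gamma> u v' * (\<beta> v' v / q v' + 2 * q v))
      = (\<Sum>v'\<in>V. ?r u v' * \<beta> v' v / q v') / p u - q v"
    using joining_defect_sum_snd[OF u] by simp
  then show ?thesis
    using lhs joining_transition_balance[OF u v] by simp
qed

end

lemma deflated_kernels_no_common_eigenvalue:
  fixes z :: "'a \<Rightarrow> complex" and w :: "'b \<Rightarrow> complex"
  assumes only_one: "\<forall>c::complex. G.graph_eigenvalue c \<and> H.graph_eigenvalue c \<longrightarrow> c = 1"
    and z: "\<exists>u\<in>U. z u \<noteq> 0" "\<forall>u\<in>U. (\<Sum>u'\<in>U. of_real (\<alpha> u u' / p u + 1 * p u') * z u') = c * z u"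
    and w: "\<exists>v\<in>V. w v \<noteq> 0" "\<forall>v\<in>V. (\<Sum>v'\<in>V. of_real (\<beta> v v' / q v + 2 * q v') * w v') = c * w v"
  shows False
proof -
  have bounded: "\<bar>Re c\<bar> \<le> 1" if "G.graph_eigenvalue c \<or> H.graph_eigenvalue c"
    using that G.real_graph_eigenvalue_abs_le_one G.complex_graph_eigenvalue_real(2)
      H.real_graph_eigenvalue_abs_le_one H.complex_graph_eigenvalue_real(2) by blast
  show False
  proof (cases "c = of_real (1 + 2)")
    case True
    then have "G.graph_eigenvalue c"
      using G.deflated_eigenfun(1)[OF z(2)] z(1) unfolding G.graph_eigenvalue_def by auto
    then show False using bounded True by simp
  next
    case False
    then have H_eigen: "H.graph_eigenvalue c"
      using H.deflated_eigenfun(1)[OF w(2)] w(1) unfolding H.graph_eigenvalue_def by auto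
    then have "c \<noteq> of_real (1 + 1)"
      using bounded by auto
    then have z_eigen: "G.eigenfun c z" and mean_zero: "(\<Sum>u\<in>U. of_real (p u) * z u) = 0"
      using G.deflated_eigenfun[OF z(2)] by blast+
    then have "c = 1"
      using only_one H_eigen z(1) unfolding G.graph_eigenvalue_def by blast
    obtain u0 where u0: "u0 \<in> U" "z u0 \<noteq> 0" using z(1) by blast
    then have "z u = z u0" if "u \<in> U" for u
      using G.complex_eigenfun_one_const z_eigen \<open>c = 1\<close> that by blast
    then have "(\<Sum>u\<in>U. of_real (p u) * z u) = of_real (\<Sum>u\<in>U. p u) * z u0"
      by (simp add: sum_distrib_right)
    then show False using mean_zero u0(2) G.sum_degree by simp
  qed
qed

lemma joining_defect_eq_zero:
  assumes only_one: "\<forall>c::complex. G.graph_eigenvalue c \<and> H.graph_eigenvalue c \<longrightarrow> c = 1"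
    and joining: "weight_joining U \<alpha> V \<beta> \<gamma>" and u: "u \<in> U" and v: "v \<in> V"
  shows "joining_defect \<gamma> u v = 0"
proof -
  have "complex_of_real (joining_defect \<gamma> u v) = 0"
  proof (rule kernel_intertwiner_eq_zero[OF G.finite_vertices H.finite_vertices _ _ u v])
    fix u v assume "u \<in> U" "v \<in> V"
    then show "(\<Sum>u'\<in>U. complex_of_real (\<alpha> u u' / p u + 1 * p u') * of_real (joining_defect \<gamma> u' v))
        = (\<Sum>v'\<in>V. complex_of_real (joining_defect \<gamma> u v') * of_real (\<beta> v' v / q v' + 2 * q v))"
      using joining_defect_intertwining[OF joining, THEN arg_cong[where f = complex_of_real]] by simp
  qed (use deflated_kernels_no_common_eigenvalue[OF only_one] in blast)
  then show ?thesis by simp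
qed

lemma weakly_disjoint_if_no_common_eigenvalue:
  assumes "\<forall>c::complex. G.graph_eigenvalue c \<and> H.graph_eigenvalue c \<longrightarrow> c = 1"
  shows "weakly_disjoint U \<alpha> V \<beta>"
  unfolding weakly_disjoint_def graph_joinings_def
proof (intro ballI, unfold mem_Collect_eq)
  fix \<gamma> u v assume "weight_joining U \<alpha> V \<beta> \<gamma>" "u \<in> U" "v \<in> V"
  then have "joining_defect \<gamma> u v = 0"
    by (rule joining_defect_eq_zero[OF assms])
  then show "degree_fun (U \<times> V) \<gamma> (u,v) = p u * q v"
    using G.degree_nonzero[OF \<open>u \<in> U\<close>] by (simp add: joining_defect_def field_simps)
qed

end

theorem theorem5p2:
  fixes U :: "'a set" and \<alpha> :: "'a \<Rightarrow> 'a \<Rightarrow> real"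
    and V :: "'b set" and \<beta> :: "'b \<Rightarrow> 'b \<Rightarrow> real"
  assumes "connected_graph U \<alpha>" and "connected_graph V \<beta>"
  shows "weakly_disjoint U \<alpha> V \<beta> \<longleftrightarrow>
    (\<forall>c::complex.
        eigenvalue (map_mat complex_of_real (transition_matrix U \<alpha>)) c \<and>
        eigenvalue (map_mat complex_of_real (transition_matrix V \<beta>)) c \<longrightarrow> c = 1)"
proof -
  interpret connected_weighted_graph_pair U \<alpha> V \<beta>
    by unfold_locales (use assms in auto)
  show ?thesis
    unfolding G.eigenvalue_transition_matrix_iff H.eigenvalue_transition_matrix_iff
    using common_eigenvalue_not_weakly_disjoint weakly_disjoint_if_no_common_eigenvalue by blast
qed

end
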